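(* Let $\kappa\in[0,1)$. Define $S_{q,\kappa}$ as the supremum of $$S=\langle\psi|A_0\otimes B_{0,0}|\psi\rangle+\langle\psi|A_0\otimes B_{1,0}|\psi\rangle+\langle\psi|A_1\otimes B_{0,1}|\psi\rangle-\langle\psi|A_1\otimes B_{1,1}|\psi\rangle$$ over all finite-dimensional Hilbert spaces $H_A,H_B$, unit vectors $|\psi\rangle\in H_A\otimes H_B$, binary observables $A_0,A_1$ on $H_A$ and binary observables $B_{y,x}$ ($x,y\in\{0,1\}$) on $H_B$ satisfying $\|B_{y,0}-B_{y,1}\|\le2\kappa$ for $y\in\{0,1\}$ (operator norm). Then $$S_{q,\kappa}=\begin{cases}2\sqrt2\big(\kappa+\sqrt{1-\kappa^2}\big),&\kappa\in[0,\tfrac1{\sqrt2}],\\ 4,&\kappa\in[\tfrac1{\sqrt2},1).\end{cases}$$ This value is attained with $|\psi\rangle=\frac1{\sqrt2}(|00\rangle+|11\rangle)$, $A_0=\sigma_z$, $A_1=\sigma_x$ and: for $\kappa\in[0,1/\sqrt2]$, $B_{0,0}=\frac{-\kappa+\sqrt{1-\kappa^2}}{\sqrt2}\sigma_x+\frac{\kappa+\sqrt{1-\kappa^2}}{\sqrt2}\sigma_z$, $B_{0,1}=\frac{\kappa+\sqrt{1-\kappa^2}}{\sqrt2}\sigma_x+\frac{-\kappa+\sqrt{1-\kappa^2}}{\sqrt2}\sigma_z$, $B_{1,0}=\frac{\kappa-\sqrt{1-\kappa^2}}{\sqrt2}\sigma_x+\frac{\kappa+\sqrt{1-\kappa^2}}{\sqrt2}\sigma_z$,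 $B_{1,1}=\frac{-\kappa-\sqrt{1-\kappa^2}}{\sqrt2}\sigma_x+\frac{-\kappa+\sqrt{1-\kappa^2}}{\sqrt2}\sigma_z$; for $\kappa\in[1/\sqrt2,1)$, $B_{0,0}=B_{1,0}=\sigma_z$, $B_{0,1}=\sigma_x$, $B_{1,1}=-\sigma_x$.
   Context: A binary observable on a Hilbert space $H$ is an operator $O=\Pi^0-\Pi^1$ where $\{\Pi^0,\Pi^1\}$ is a two-outcome POVM on $H$ (equivalently a Hermitian $O$ with $-\mathbb 1\le O\le\mathbb 1$); outcome $0$ corresponds to $+1$. $B_{y,x}$ is Bob's observable for his input $y$ when Alice's input $x$ is leaked to him; the constraint $\|B_{y,0}-B_{y,1}\|\le 2\kappa$ expresses that at most $\kappa$ of Alice's input information leaks to Bob. $\sigma_x,\sigma_z$ are the Pauli matrices. *)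

theory Defs
  imports "HOL-Analysis.Analysis" "Jordan_Normal_Form.Matrix"
begin

text \<open>Finite-dimensional Hilbert spaces are modelled as C^n (complex column vectors
of dimension n), operators as complex n x n matrices (Jordan_Normal_Form).\<close>

definition cinner :: "complex vec \<Rightarrow> complex vec \<Rightarrow> complex" where
  "cinner v w = (\<Sum>i<dim_vec v. cnj (v $ i) * w $ i)"

definition vnorm :: "complex vec \<Rightarrow> real" where
  "vnorm v = sqrt (\<Sum>i<dim_vec v. (cmod (v $ i))\<^sup>2)"

definition opnorm :: "complex mat \<Rightarrow> real" where
  "opnorm M = Sup {vnorm (M *\<^sub>v v) | v. v \<in> carrier_vec (dim_col M) \<and> vnorm v = 1}"

definition psd :: "nat \<Rightarrow> complex mat \<Rightarrow> bool" where
  "psd n P \<longleftrightarrow> P \<in> carrier_mat n n \<and>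
     (\<forall>v \<in> carrier_vec n. cinner v (P *\<^sub>v v) \<in> \<real> \<and> 0 \<le> Re (cinner v (P *\<^sub>v v)))"

definition binary_obs :: "nat \<Rightarrow> complex mat \<Rightarrow> bool" where
  "binary_obs n Ob \<longleftrightarrow> (\<exists>P0 P1. psd n P0 \<and> psd n P1 \<and> P0 + P1 = 1\<^sub>m n \<and> Ob = P0 - P1)"

text \<open>Kronecker (tensor) product; basis |i>|j> of C^m (x) C^n is index i*n+j.\<close>
definition kron :: "complex mat \<Rightarrow> complex mat \<Rightarrow> complex mat" where
  "kron A B = mat (dim_row A * dim_row B) (dim_col A * dim_col B)
     (\<lambda>(i, j). A $$ (i div dim_row B, j div dim_col B) * B $$ (i mod dim_row B, j mod dim_col B))"

definition expect :: "complex vec \<Rightarrow> complex mat \<Rightarrow> complex" where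
  "expect psi M = cinner psi (M *\<^sub>v psi)"

text \<open>Admissible strategy: dim H_A = m, dim H_B = n, Bij = B_{y=i, x=j}.\<close>
definition chsh_config ::
  "real \<Rightarrow> nat \<Rightarrow> nat \<Rightarrow> complex vec \<Rightarrow> complex mat \<Rightarrow> complex mat \<Rightarrow>
   complex mat \<Rightarrow> complex mat \<Rightarrow> complex mat \<Rightarrow> complex mat \<Rightarrow> bool" where
  "chsh_config \<kappa> m n psi A0 A1 B00 B01 B10 B11 \<longleftrightarrow>
     psi \<in> carrier_vec (m * n) \<and> vnorm psi = 1 \<and>
     binary_obs m A0 \<and> binary_obs m A1 \<and>
     binary_obs n B00 \<and> binary_obs n B01 \<and> binary_obs n B10 \<and> binary_obs n B11 \<and>
     opnorm (B00 - B01) \<le> 2 * \<kappa> \<and> opnorm (B10 - B11) \<le> 2 * \<kappa>"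

text \<open>The score S (real part; it is real for Hermitian observables).\<close>
definition chsh_score ::
  "complex vec \<Rightarrow> complex mat \<Rightarrow> complex mat \<Rightarrow>
   complex mat \<Rightarrow> complex mat \<Rightarrow> complex mat \<Rightarrow> complex mat \<Rightarrow> real" where
  "chsh_score psi A0 A1 B00 B01 B10 B11 =
     Re (expect psi (kron A0 B00) + expect psi (kron A0 B10)
       + expect psi (kron A1 B01) - expect psi (kron A1 B11))"

definition chsh_vals :: "real \<Rightarrow> real set" where
  "chsh_vals \<kappa> = {chsh_score psi A0 A1 B00 B01 B10 B11 | m n psi A0 A1 B00 B01 B10 B11.
      chsh_config \<kappa> m n psi A0 A1 B00 B01 B10 B11}"

definition S_q :: "real \<Rightarrow> real" where
  "S_q \<kappa> = Sup (chsh_vals \<kappa>)"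

definition sigma_x :: "complex mat" where
  "sigma_x = mat_of_rows_list 2 [[0, 1], [1, 0]]"

definition sigma_z :: "complex mat" where
  "sigma_z = mat_of_rows_list 2 [[1, 0], [0, -1]]"

definition phi_plus :: "complex vec" where
  "phi_plus = vec_of_list [1 / sqrt 2, 0, 0, 1 / sqrt 2]"

end

theory Submission
  imports Defs
begin

(* Put u_x = (A_x \<otimes> 1) \<psi> and w_yx = (1 \<otimes> B_yx) \<psi>. Every term of S is an inner product
   <u_x, w_yx>, so by Cauchy-Schwarz S \<le> |w_00 + w_10| + |w_01 - w_11|, where all w have norm at
   most 1 and |w_y0 - w_y1| \<le> 2\<kappa> because of the leakage constraint. For \<kappa> = 0 the parallelogram
   law gives |w_00 + w_10|^2 + |w_01 - w_11|^2 \<le> 4, i.e. Tsirelson's bound 2 sqrt 2. For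
   0 < \<kappa> \<le> 1/sqrt 2 a sum-of-squares identity with weights p = 2\<kappa> sqrt(1 - \<kappa>^2) and
   q = 1 - 2\<kappa>^2 bounds this sum by 4(\<kappa> + sqrt(1 - \<kappa>^2))^2; beyond 1/sqrt 2 the trivial
   bound S \<le> 4 is the better one. Maximally entangled qubit strategies attain both values. *)

section \<open>Squared norms of finite families\<close>

definition sqnorm :: "'a set \<Rightarrow> ('a \<Rightarrow> complex) \<Rightarrow> real" where
  "sqnorm I f = (\<Sum>i\<in>I. (cmod (f i))\<^sup>2)"

lemma sqnorm_nonneg: "0 \<le> sqnorm I f"
  unfolding sqnorm_def by (simp add: sum_nonneg)

lemma sqnorm_cong: "(\<And>i. i \<in> I \<Longrightarrow> f i = g i) \<Longrightarrow> sqnorm I f = sqnorm I g"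
  unfolding sqnorm_def by simp

lemma sqnorm_uminus: "sqnorm I (\<lambda>i. - f i) = sqnorm I f"
  unfolding sqnorm_def by simp

lemma sqnorm_le_0_imp_eq_0:
  assumes "finite I" "sqnorm I f \<le> 0" "i \<in> I"
  shows "f i = 0"
proof -
  have "sqnorm I f = 0" using assms(2) sqnorm_nonneg[of I f] by linarith
  then show ?thesis unfolding sqnorm_def using assms(1,3) by (simp add: sum_nonneg_eq_0_iff)
qed

lemma cmod_add_power2: "(cmod (a + b))\<^sup>2 = (cmod a)\<^sup>2 + (cmod b)\<^sup>2 + 2 * Re (cnj a * b)"
  unfolding cmod_power2 by (simp add: power2_eq_square algebra_simps)

lemma cmod_parallelogram: "(cmod (a + b))\<^sup>2 + (cmod (a - b))\<^sup>2 = 2 * (cmod a)\<^sup>2 + 2 * (cmod b)\<^sup>2"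
  unfolding cmod_power2 by (simp add: power2_eq_square algebra_simps)

lemma sqnorm_add: "sqnorm I (\<lambda>i. f i + g i) = sqnorm I f + sqnorm I g + 2 * Re (\<Sum>i\<in>I. cnj (f i) * g i)"
  unfolding sqnorm_def cmod_add_power2 by (simp add: sum.distrib Re_sum sum_distrib_left)

lemma sqnorm_diff: "sqnorm I (\<lambda>i. f i - g i) = sqnorm I f + sqnorm I g - 2 * Re (\<Sum>i\<in>I. cnj (f i) * g i)"
  using sqnorm_add[of I f "\<lambda>i. - g i"] by (simp add: sqnorm_uminus sum_negf)

lemma Re_sum_cnj_le_sqnorm: "Re (\<Sum>i\<in>I. cnj (f i) * g i) \<le> sqrt (sqnorm I f) * sqrt (sqnorm I g)"
proof -
  have "Re (\<Sum>i\<in>I. cnj (f i) * g i) = (\<Sum>i\<in>I. Re (cnj (f i) * g i))" by (simp add: Re_sum)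
  also have "\<dots> \<le> (\<Sum>i\<in>I. \<bar>cmod (f i)\<bar> * \<bar>cmod (g i)\<bar>)"
    by (rule sum_mono) (metis abs_norm_cancel complex_Re_le_cmod complex_mod_cnj norm_mult)
  also have "\<dots> \<le> L2_set (\<lambda>i. cmod (f i)) I * L2_set (\<lambda>i. cmod (g i)) I" by (rule L2_set_mult_ineq)
  finally show ?thesis unfolding L2_set_def sqnorm_def .
qed

lemma Re_sum_cnj_le_sqrt_sqnorm:
  assumes "sqnorm I u \<le> 1"
  shows "Re (\<Sum>i\<in>I. cnj (u i) * g i) \<le> sqrt (sqnorm I g)"
proof -
  have "sqrt (sqnorm I u) * sqrt (sqnorm I g) \<le> 1 * sqrt (sqnorm I g)"
    by (rule mult_right_mono) (use assms sqnorm_nonneg in auto)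
  then show ?thesis using Re_sum_cnj_le_sqnorm[of u g I] by linarith
qed

lemma sqnorm_add_triangle: "sqrt (sqnorm I (\<lambda>i. f i + g i)) \<le> sqrt (sqnorm I f) + sqrt (sqnorm I g)"
proof -
  have "sqnorm I (\<lambda>i. f i + g i) \<le> (sqrt (sqnorm I f) + sqrt (sqnorm I g))\<^sup>2"
    using Re_sum_cnj_le_sqnorm[of f g I] sqnorm_nonneg[of I f] sqnorm_nonneg[of I g]
    by (simp add: sqnorm_add power2_sum)
  then show ?thesis by (simp add: real_le_lsqrt sqnorm_nonneg)
qed

lemma sqnorm_diff_triangle: "sqrt (sqnorm I (\<lambda>i. f i - g i)) \<le> sqrt (sqnorm I f) + sqrt (sqnorm I g)"
  using sqnorm_add_triangle[of I f "\<lambda>i. - g i"] by (simp add: sqnorm_uminus)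

lemma sqrt_add_le_sqrt_double:
  fixes x y :: real
  assumes "0 \<le> x" "0 \<le> y"
  shows "sqrt x + sqrt y \<le> sqrt (2 * (x + y))"
proof -
  have "0 \<le> (sqrt x - sqrt y)\<^sup>2" by simp
  then have "(sqrt x + sqrt y)\<^sup>2 \<le> 2 * (x + y)"
    using assms by (simp add: power2_eq_square algebra_simps)
  then show ?thesis by (rule real_le_rsqrt)
qed

section \<open>The sum-of-squares bound\<close>

definition leaky_chsh_value :: "real \<Rightarrow> real" where
  "leaky_chsh_value k = (if k \<le> 1 / sqrt 2 then 2 * sqrt 2 * (k + sqrt (1 - k\<^sup>2)) else 4)"

lemma chsh_sos_identity:
  fixes p q a b c d :: real
  assumes "p\<^sup>2 + q\<^sup>2 = 1"
  shows "(p - q + 1) * (a\<^sup>2 + b\<^sup>2 + c\<^sup>2 + d\<^sup>2) + q * ((a - c)\<^sup>2 + (b - d)\<^sup>2) - p * ((a + b)\<^sup>2 + (c - d)\<^sup>2)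
    = ((a - p*b - q*c)\<^sup>2 + (- p*a + b - q*d)\<^sup>2 + (- q*a + c + p*d)\<^sup>2 + (- q*b + p*c + d)\<^sup>2) / 2"
proof -
  have p2: "p\<^sup>2 = 1 - q\<^sup>2" using assms by simp
  have "2 * ((p - q + 1) * (a\<^sup>2 + b\<^sup>2 + c\<^sup>2 + d\<^sup>2) + q * ((a - c)\<^sup>2 + (b - d)\<^sup>2)
      - p * ((a + b)\<^sup>2 + (c - d)\<^sup>2))
    = (a - p*b - q*c)\<^sup>2 + (- p*a + b - q*d)\<^sup>2 + (- q*a + c + p*d)\<^sup>2 + (- q*b + p*c + d)\<^sup>2"
    by (simp add: power2_eq_square algebra_simps p2[unfolded power2_eq_square])
  then show ?thesis by simp
qed

lemma chsh_sos_identity_cmod: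
  fixes a b c d :: complex and p q :: real
  assumes "p\<^sup>2 + q\<^sup>2 = 1"
  shows "(p - q + 1) * ((cmod a)\<^sup>2 + (cmod b)\<^sup>2 + (cmod c)\<^sup>2 + (cmod d)\<^sup>2)
      + q * ((cmod (a - c))\<^sup>2 + (cmod (b - d))\<^sup>2) - p * ((cmod (a + b))\<^sup>2 + (cmod (c - d))\<^sup>2)
    = ((cmod (a - p*b - q*c))\<^sup>2 + (cmod (- p*a + b - q*d))\<^sup>2
      + (cmod (- q*a + c + p*d))\<^sup>2 + (cmod (- q*b + p*c + d))\<^sup>2) / 2"
  using chsh_sos_identity[OF assms, of "Re a" "Re b" "Re c" "Re d"]
    chsh_sos_identity[OF assms, of "Im a" "Im b" "Im c" "Im d"]
  unfolding cmod_power2 by (simp add: algebra_simps)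

lemma sqnorm_chsh_sos_ineq:
  fixes a b c d :: "'a \<Rightarrow> complex" and p q :: real
  assumes "p\<^sup>2 + q\<^sup>2 = 1"
  shows "p * (sqnorm I (\<lambda>i. a i + b i) + sqnorm I (\<lambda>i. c i - d i)) \<le>
    (p - q + 1) * (sqnorm I a + sqnorm I b + sqnorm I c + sqnorm I d)
      + q * (sqnorm I (\<lambda>i. a i - c i) + sqnorm I (\<lambda>i. b i - d i))"
proof -
  have "0 \<le> (\<Sum>i\<in>I. (p - q + 1) * ((cmod (a i))\<^sup>2 + (cmod (b i))\<^sup>2 + (cmod (c i))\<^sup>2 + (cmod (d i))\<^sup>2)
      + q * ((cmod (a i - c i))\<^sup>2 + (cmod (b i - d i))\<^sup>2) - p * ((cmod (a i + b i))\<^sup>2 + (cmod (c i - d i))\<^sup>2))"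
    by (rule sum_nonneg, subst chsh_sos_identity_cmod[OF assms], simp)
  then show ?thesis
    unfolding sqnorm_def by (simp add: sum.distrib sum_subtractf sum_distrib_left algebra_simps)
qed

lemma sqnorm_leaky_pairs_le:
  fixes a b c d :: "'a \<Rightarrow> complex" and k :: real
  assumes fin: "finite I" and k0: "0 \<le> k" and k1: "k \<le> 1 / sqrt 2"
    and na: "sqnorm I a \<le> 1" and nb: "sqnorm I b \<le> 1" and nc: "sqnorm I c \<le> 1" and nd: "sqnorm I d \<le> 1"
    and dac: "sqnorm I (\<lambda>i. a i - c i) \<le> 4 * k\<^sup>2" and dbd: "sqnorm I (\<lambda>i. b i - d i) \<le> 4 * k\<^sup>2"
  shows "sqnorm I (\<lambda>i. a i + b i) + sqnorm I (\<lambda>i. c i - d i) \<le> 4 * (k + sqrt (1 - k\<^sup>2))\<^sup>2"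
proof (cases "k = 0")
  case True
  then have "c i = a i" "d i = b i" if "i \<in> I" for i
    using sqnorm_le_0_imp_eq_0[OF fin _ that] dac dbd by fastforce+
  then have "sqnorm I (\<lambda>i. a i + b i) + sqnorm I (\<lambda>i. c i - d i) = 2 * sqnorm I a + 2 * sqnorm I b"
    unfolding sqnorm_def sum.distrib[symmetric] sum_distrib_left by (simp add: cmod_parallelogram)
  then show ?thesis using True na nb by simp
next
  case False
  have k2: "k\<^sup>2 \<le> 1/2"
    using power_mono[OF k1 k0, of 2] by (simp add: power_divide)
  define r where "r = sqrt (1 - k\<^sup>2)"
  have r2: "r\<^sup>2 = 1 - k\<^sup>2" and r0: "0 < r" unfolding r_def using k2 by simp_all
  define p where "p = 2 * k * r"
  define q where "q = 1 - 2 * k\<^sup>2"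
  have "p\<^sup>2 = 4 * k\<^sup>2 * (1 - k\<^sup>2)" unfolding p_def using r2 by (simp add: power_mult_distrib)
  then have pq: "p\<^sup>2 + q\<^sup>2 = 1" unfolding q_def by (simp add: power2_eq_square algebra_simps)
  have p0: "0 < p" unfolding p_def using False k0 r0 by simp
  have q0: "0 \<le> q" "0 \<le> p - q + 1" unfolding q_def using k2 p0 k0 by simp_all
  have "p * (sqnorm I (\<lambda>i. a i + b i) + sqnorm I (\<lambda>i. c i - d i)) \<le>
    (p - q + 1) * (sqnorm I a + sqnorm I b + sqnorm I c + sqnorm I d)
      + q * (sqnorm I (\<lambda>i. a i - c i) + sqnorm I (\<lambda>i. b i - d i))"
    by (rule sqnorm_chsh_sos_ineq[OF pq])
  also have "\<dots> \<le> (p - q + 1) * 4 + q * (8 * k\<^sup>2)"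
    by (intro add_mono mult_left_mono) (use na nb nc nd dac dbd q0 in auto)
  also have "\<dots> = p * (4 * (k + r)\<^sup>2)"
  proof -
    have kr2: "(k + r)\<^sup>2 = 1 + 2 * k * r" using r2 by (simp add: power2_sum)
    have "p * (4 * (k + r)\<^sup>2) = 8 * k * r + 16 * k\<^sup>2 * r\<^sup>2"
      unfolding kr2 p_def by (simp add: power2_eq_square algebra_simps)
    then show ?thesis unfolding r2 p_def q_def by (simp add: power2_eq_square algebra_simps)
  qed
  finally show ?thesis unfolding r_def[symmetric] using p0 by simp
qed

lemma sqrt_sqnorm_leaky_pairs_le:
  fixes a b c d :: "'a \<Rightarrow> complex" and k :: real
  assumes "finite I" "0 \<le> k" and k1: "k \<le> 1 / sqrt 2"
    and "sqnorm I a \<le> 1" "sqnorm I b \<le> 1" "sqnorm I c \<le> 1" "sqnorm I d \<le> 1"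
    and "sqnorm I (\<lambda>i. a i - c i) \<le> 4 * k\<^sup>2" "sqnorm I (\<lambda>i. b i - d i) \<le> 4 * k\<^sup>2"
  shows "sqrt (sqnorm I (\<lambda>i. a i + b i)) + sqrt (sqnorm I (\<lambda>i. c i - d i)) \<le> 2 * sqrt 2 * (k + sqrt (1 - k\<^sup>2))"
proof -
  have "1 / sqrt 2 \<le> (1::real)" by (simp add: divide_le_eq)
  then have "k \<le> 1" using k1 by linarith
  then have kr: "0 \<le> k + sqrt (1 - k\<^sup>2)" using assms(2) by (simp add: power_le_one)
  have "sqrt (sqnorm I (\<lambda>i. a i + b i)) + sqrt (sqnorm I (\<lambda>i. c i - d i))
      \<le> sqrt (2 * (sqnorm I (\<lambda>i. a i + b i) + sqnorm I (\<lambda>i. c i - d i)))"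
    by (rule sqrt_add_le_sqrt_double) (simp_all add: sqnorm_nonneg)
  also have "\<dots> \<le> sqrt (2 * (4 * (k + sqrt (1 - k\<^sup>2))\<^sup>2))"
    using sqnorm_leaky_pairs_le[OF assms] by simp
  also have "\<dots> = sqrt ((2 * sqrt 2 * (k + sqrt (1 - k\<^sup>2)))\<^sup>2)"
    by (simp add: power_mult_distrib)
  also have "\<dots> = 2 * sqrt 2 * (k + sqrt (1 - k\<^sup>2))"
    using kr by simp
  finally show ?thesis .
qed

lemma leaky_chsh_bound:
  fixes u0 u1 a b c d :: "'a \<Rightarrow> complex" and k :: real
  assumes fin: "finite I" and k0: "0 \<le> k"
    and nu: "sqnorm I u0 \<le> 1" "sqnorm I u1 \<le> 1"
    and na: "sqnorm I a \<le> 1" and nb: "sqnorm I b \<le> 1" and nc: "sqnorm I c \<le> 1" and nd: "sqnorm I d \<le> 1"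
    and dac: "sqnorm I (\<lambda>i. a i - c i) \<le> 4 * k\<^sup>2" and dbd: "sqnorm I (\<lambda>i. b i - d i) \<le> 4 * k\<^sup>2"
  shows "Re (\<Sum>i\<in>I. cnj (u0 i) * (a i + b i)) + Re (\<Sum>i\<in>I. cnj (u1 i) * (c i - d i))
    \<le> leaky_chsh_value k"
proof -
  have S: "Re (\<Sum>i\<in>I. cnj (u0 i) * (a i + b i)) + Re (\<Sum>i\<in>I. cnj (u1 i) * (c i - d i))
      \<le> sqrt (sqnorm I (\<lambda>i. a i + b i)) + sqrt (sqnorm I (\<lambda>i. c i - d i))"
    by (intro add_mono Re_sum_cnj_le_sqrt_sqnorm nu)
  show ?thesis
  proof (cases "k \<le> 1 / sqrt 2")
    case True
    then show ?thesis
      using S sqrt_sqnorm_leaky_pairs_le[OF fin k0 True na nb nc nd dac dbd]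
      unfolding leaky_chsh_value_def by simp
  next
    case False
    have unit: "sqrt (sqnorm I g) \<le> 1" if "sqnorm I g \<le> 1" for g :: "'a \<Rightarrow> complex"
      using that by simp
    have "sqrt (sqnorm I (\<lambda>i. a i + b i)) \<le> 2"
      using sqnorm_add_triangle[of I a b] unit[OF na] unit[OF nb] by linarith
    moreover have "sqrt (sqnorm I (\<lambda>i. c i - d i)) \<le> 2"
      using sqnorm_diff_triangle[of I c d] unit[OF nc] unit[OF nd] by linarith
    ultimately show ?thesis using S False unfolding leaky_chsh_value_def by simp
  qed
qed

section \<open>Hermitian matrices and binary observables\<close>

lemma mult_mat_vec_index_sum:
  assumes "M \<in> carrier_mat k n" "v \<in> carrier_vec n" "i < k"
  shows "(M *\<^sub>v v) $ i = (\<Sum>j<n. M $$ (i, j) * v $ j)"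
  using assms by (auto simp: scalar_prod_def atLeast0LessThan intro!: sum.cong)

lemma vnorm_sqnorm: "vnorm v = sqrt (sqnorm {..<dim_vec v} (($) v))"
  unfolding vnorm_def sqnorm_def ..

lemma vnorm_nonneg: "0 \<le> vnorm v"
  unfolding vnorm_sqnorm by (simp add: sqnorm_nonneg)

lemma vnorm_smult: "vnorm (c \<cdot>\<^sub>v v) = cmod c * vnorm v"
proof -
  have "(\<Sum>i<dim_vec v. (cmod ((c \<cdot>\<^sub>v v) $ i))\<^sup>2) = (cmod c)\<^sup>2 * (\<Sum>i<dim_vec v. (cmod (v $ i))\<^sup>2)"
    by (simp add: sum_distrib_left norm_mult power_mult_distrib)
  then show ?thesis unfolding vnorm_def by (simp add: real_sqrt_mult)
qed

lemma cinner_add_left: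
  "v \<in> carrier_vec n \<Longrightarrow> w \<in> carrier_vec n \<Longrightarrow> cinner (v + w) u = cinner v u + cinner w u"
  unfolding cinner_def by (simp add: sum.distrib ring_distribs)

lemma cinner_mult_mat_vec_sum:
  assumes "P \<in> carrier_mat n n" "u \<in> carrier_vec n" "w \<in> carrier_vec n"
  shows "cinner u (P *\<^sub>v w) = (\<Sum>i<n. \<Sum>j<n. cnj (u $ i) * P $$ (i, j) * w $ j)"
proof -
  have "cinner u (P *\<^sub>v w) = (\<Sum>i<n. cnj (u $ i) * (\<Sum>j<n. P $$ (i, j) * w $ j))"
    unfolding cinner_def using assms
    by (intro sum.cong) (auto simp: mult_mat_vec_index_sum[OF assms(1,3)] simp del: index_mult_mat_vec)
  then show ?thesis by (simp add: sum_distrib_left mult.assoc)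
qed

definition hermitian :: "nat \<Rightarrow> complex mat \<Rightarrow> bool" where
  "hermitian n P \<longleftrightarrow> P \<in> carrier_mat n n \<and> (\<forall>i<n. \<forall>j<n. cnj (P $$ (j, i)) = P $$ (i, j))"

lemma hermitian_cinner_mult:
  assumes h: "hermitian n P" and u: "u \<in> carrier_vec n" and w: "w \<in> carrier_vec n"
  shows "cinner u (P *\<^sub>v w) = cinner (P *\<^sub>v u) w"
proof -
  have P: "P \<in> carrier_mat n n" and he: "\<And>i j. i < n \<Longrightarrow> j < n \<Longrightarrow> cnj (P $$ (j, i)) = P $$ (i, j)"
    using h unfolding hermitian_def by blast+
  have "cinner u (P *\<^sub>v w) = (\<Sum>i<n. \<Sum>j<n. cnj (u $ i) * P $$ (i, j) * w $ j)"
    by (rule cinner_mult_mat_vec_sum[OF P u w])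
  also have "\<dots> = (\<Sum>j<n. \<Sum>i<n. cnj (P $$ (j, i) * u $ i) * w $ j)"
    by (subst sum.swap) (simp add: he mult.commute)
  also have "\<dots> = (\<Sum>j<n. cnj ((P *\<^sub>v u) $ j) * w $ j)"
    by (intro sum.cong refl)
      (simp add: mult_mat_vec_index_sum[OF P u] cnj_sum sum_distrib_right del: index_mult_mat_vec)
  also have "\<dots> = cinner (P *\<^sub>v u) w"
    unfolding cinner_def using P by simp
  finally show ?thesis .
qed

lemma hermitian_diff: "hermitian n A \<Longrightarrow> hermitian n B \<Longrightarrow> hermitian n (A - B)"
  unfolding hermitian_def by auto

lemma cinner_mult_mat_vec_two_points:
  fixes x y :: complex
  assumes P: "P \<in> carrier_mat n n" and ij: "i < n" "j < n" "i \<noteq> j"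
    and v: "v = vec n (\<lambda>k. if k = i then x else if k = j then y else 0)"
  shows "cinner v (P *\<^sub>v v) =
    cnj x * (P $$ (i, i) * x + P $$ (i, j) * y) + cnj y * (P $$ (j, i) * x + P $$ (j, j) * y)"
proof -
  have restrict: "(\<Sum>k<n. h k) = (\<Sum>k\<in>{i, j}. h k)"
    if "\<And>k. k < n \<Longrightarrow> k \<notin> {i, j} \<Longrightarrow> h k = 0" for h :: "nat \<Rightarrow> complex"
    by (rule sum.mono_neutral_right) (use ij that in auto)
  have vc: "v \<in> carrier_vec n" unfolding v by simp
  have "cinner v (P *\<^sub>v v) = (\<Sum>a<n. \<Sum>b<n. cnj (v $ a) * P $$ (a, b) * v $ b)"
    by (rule cinner_mult_mat_vec_sum[OF P vc vc])
  also have "\<dots> = (\<Sum>a\<in>{i, j}. \<Sum>b<n. cnj (v $ a) * P $$ (a, b) * v $ b)"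
    by (rule restrict) (simp add: v)
  also have "\<dots> = (\<Sum>a\<in>{i, j}. \<Sum>b\<in>{i, j}. cnj (v $ a) * P $$ (a, b) * v $ b)"
    by (intro sum.cong refl restrict) (simp add: v)
  finally show ?thesis using ij by (simp add: v algebra_simps)
qed

lemma cinner_mult_mat_vec_unit:
  assumes P: "P \<in> carrier_mat n n" and i: "i < n"
    and v: "v = vec n (\<lambda>k. if k = i then 1 else 0)"
  shows "cinner v (P *\<^sub>v v) = P $$ (i, i)"
proof -
  have restrict: "(\<Sum>k<n. h k) = h i" if "\<And>k. k < n \<Longrightarrow> k \<noteq> i \<Longrightarrow> h k = 0" for h :: "nat \<Rightarrow> complex"
    using sum.mono_neutral_right[of "{..<n}" "{i}" h] i that by auto
  have vc: "v \<in> carrier_vec n" unfolding v by simp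
  have "cinner v (P *\<^sub>v v) = (\<Sum>a<n. \<Sum>b<n. cnj (v $ a) * P $$ (a, b) * v $ b)"
    by (rule cinner_mult_mat_vec_sum[OF P vc vc])
  also have "\<dots> = (\<Sum>b<n. cnj (v $ i) * P $$ (i, b) * v $ b)"
    by (rule restrict) (simp add: v)
  also have "\<dots> = cnj (v $ i) * P $$ (i, i) * v $ i"
    by (rule restrict) (simp add: v)
  finally show ?thesis using i by (simp add: v)
qed

lemma psd_hermitian:
  assumes "psd n P" shows "hermitian n P"
proof -
  have P: "P \<in> carrier_mat n n" and re: "\<And>v. v \<in> carrier_vec n \<Longrightarrow> cinner v (P *\<^sub>v v) \<in> \<real>"
    using assms unfolding psd_def by auto
  have diag: "Im (P $$ (i, i)) = 0" if "i < n" for i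
    using re[of "vec n (\<lambda>k. if k = i then 1 else 0)"] cinner_mult_mat_vec_unit[OF P that refl]
    by (simp add: complex_is_Real_iff)
  have "cnj (P $$ (j, i)) = P $$ (i, j)" if ij: "i < n" "j < n" for i j
  proof (cases "i = j")
    case True
    then show ?thesis using diag[OF ij(1)] by (simp add: complex_eq_iff)
  next
    case False
    \<comment> \<open>the quadratic form is real on e_i + e_j and on e_i + \<i> e_j\<close>
    have "Im (P $$ (i, i) + P $$ (i, j) + (P $$ (j, i) + P $$ (j, j))) = 0"
      using re[of "vec n (\<lambda>k. if k = i then 1 else if k = j then 1 else 0)"]
        cinner_mult_mat_vec_two_points[OF P ij False refl, of 1 1]
      by (simp add: complex_is_Real_iff)
    moreover have "Im (P $$ (i, i) + P $$ (i, j) * \<i> + (- \<i>) * (P $$ (j, i) + P $$ (j, j) * \<i>)) = 0"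
      using re[of "vec n (\<lambda>k. if k = i then 1 else if k = j then \<i> else 0)"]
        cinner_mult_mat_vec_two_points[OF P ij False refl, of 1 \<i>]
      by (simp add: complex_is_Real_iff)
    ultimately show ?thesis using diag[OF ij(1)] diag[OF ij(2)] by (simp add: complex_eq_iff algebra_simps)
  qed
  then show ?thesis unfolding hermitian_def using P by auto
qed

lemma binary_obs_hermitian: "binary_obs n B \<Longrightarrow> hermitian n B"
  unfolding binary_obs_def using psd_hermitian hermitian_diff by blast

lemma binary_obs_carrier: "binary_obs n B \<Longrightarrow> B \<in> carrier_mat n n"
  using binary_obs_hermitian hermitian_def by blast

lemma psd_resolution_cross_nonneg:
  assumes p0: "psd n P0" and p1: "psd n P1" and s: "P0 + P1 = 1\<^sub>m n" and v: "v \<in> carrier_vec n"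
  shows "0 \<le> Re (cinner (P0 *\<^sub>v v) (P1 *\<^sub>v v))"
proof -
  have P0: "P0 \<in> carrier_mat n n" and P1: "P1 \<in> carrier_mat n n" using p0 p1 psd_def by auto
  have P1_eq: "P1 = 1\<^sub>m n - P0"
  proof (rule eq_matI)
    fix i j assume "i < dim_row (1\<^sub>m n - P0)" "j < dim_col (1\<^sub>m n - P0)"
    then have ij: "i < n" "j < n" using P0 by auto
    have "(P0 + P1) $$ (i, j) = 1\<^sub>m n $$ (i, j)" using s by simp
    then show "P1 $$ (i, j) = (1\<^sub>m n - P0) $$ (i, j)" using ij P0 P1 by (simp add: algebra_simps)
  qed (use P0 P1 in auto)
  define x where "x = P0 *\<^sub>v v"
  have x: "x \<in> carrier_vec n" unfolding x_def using P0 v by simp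
  have y: "P1 *\<^sub>v v = v - x"
    unfolding P1_eq x_def using minus_mult_distrib_mat_vec[OF one_carrier_mat P0 v] v by simp
  have v_eq: "v = x + (v - x)" using x v by auto
  \<comment> \<open>P0 P1 = P1 P0 = P0 - P0^2, so the cross term splits into two nonnegative quadratic forms\<close>
  define z where "z = x - P0 *\<^sub>v x"
  have P1x: "P1 *\<^sub>v x = z"
    unfolding P1_eq z_def using minus_mult_distrib_mat_vec[OF one_carrier_mat P0 x] x by simp
  have P0y: "P0 *\<^sub>v (v - x) = z"
    unfolding z_def using mult_minus_distrib_mat_vec[OF P0 v x] unfolding x_def by simp
  have "cinner x (v - x) = cinner v (P0 *\<^sub>v (v - x))"
    using hermitian_cinner_mult[OF psd_hermitian[OF p0] v, of "v - x"] x v by (simp add: x_def)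
  also have "\<dots> = cinner x (P1 *\<^sub>v x) + cinner (v - x) (P0 *\<^sub>v (v - x))"
    unfolding P1x P0y by (subst v_eq) (rule cinner_add_left[OF x], use x v in simp)
  finally have "cinner x (v - x) = cinner x (P1 *\<^sub>v x) + cinner (v - x) (P0 *\<^sub>v (v - x))" .
  moreover have "0 \<le> Re (cinner x (P1 *\<^sub>v x))" using p1 x psd_def by auto
  moreover have "0 \<le> Re (cinner (v - x) (P0 *\<^sub>v (v - x)))" using p0 x v psd_def by auto
  ultimately show ?thesis unfolding y x_def[symmetric] by simp
qed

lemma binary_obs_sqnorm_le:
  assumes B: "binary_obs n B" and v: "v \<in> carrier_vec n"
  shows "sqnorm {..<n} (($) (B *\<^sub>v v)) \<le> sqnorm {..<n} (($) v)"
proof -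
  obtain P0 P1 where p0: "psd n P0" and p1: "psd n P1" and s: "P0 + P1 = 1\<^sub>m n" and B_eq: "B = P0 - P1"
    using B binary_obs_def by blast
  have P0: "P0 \<in> carrier_mat n n" and P1: "P1 \<in> carrier_mat n n" using p0 p1 psd_def by auto
  define x where "x = P0 *\<^sub>v v"
  define y where "y = P1 *\<^sub>v v"
  have xy: "x \<in> carrier_vec n" "y \<in> carrier_vec n" unfolding x_def y_def using P0 P1 v by auto
  have "v = x + y" unfolding x_def y_def using add_mult_distrib_mat_vec[OF P0 P1 v] s v by simp
  then have v_sum: "sqnorm {..<n} (($) v) = sqnorm {..<n} (\<lambda>i. x $ i + y $ i)"
    by (intro sqnorm_cong) (use xy in simp)
  have "(B *\<^sub>v v) $ i = x $ i - y $ i" if "i < n" for i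
    unfolding B_eq x_def y_def using P0 P1 v that by (simp add: minus_mult_distrib_mat_vec)
  then have Bv: "sqnorm {..<n} (($) (B *\<^sub>v v)) = sqnorm {..<n} (\<lambda>i. x $ i - y $ i)"
    by (intro sqnorm_cong) simp
  have "0 \<le> Re (cinner x y)"
    unfolding x_def y_def by (rule psd_resolution_cross_nonneg[OF p0 p1 s v])
  then show ?thesis
    unfolding Bv v_sum sqnorm_add sqnorm_diff using xy by (simp add: cinner_def)
qed

lemma binary_obs_vnorm_le:
  assumes B: "binary_obs n B" and v: "v \<in> carrier_vec n"
  shows "vnorm (B *\<^sub>v v) \<le> vnorm v"
  using binary_obs_sqnorm_le[OF assms] binary_obs_carrier[OF B] v unfolding vnorm_sqnorm by simp

text \<open>The boundedness hypothesis is needed because opnorm is a real Sup, which is junk for unbounded sets.\<close>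

lemma vnorm_mult_le_opnorm:
  assumes M: "M \<in> carrier_mat n n"
    and bounded: "\<And>v. v \<in> carrier_vec n \<Longrightarrow> vnorm v = 1 \<Longrightarrow> vnorm (M *\<^sub>v v) \<le> C"
    and v: "v \<in> carrier_vec n"
  shows "vnorm (M *\<^sub>v v) \<le> opnorm M * vnorm v"
proof (cases "vnorm v = 0")
  case True
  then have "v $ i = 0" if "i < n" for i
    using sqnorm_le_0_imp_eq_0[of "{..<n}" "($) v" i] v that unfolding vnorm_sqnorm by simp
  then have "(M *\<^sub>v v) $ i = 0" if "i < n" for i
    using that by (simp add: mult_mat_vec_index_sum[OF M v that])
  then have "vnorm (M *\<^sub>v v) = 0"
    using M unfolding vnorm_sqnorm sqnorm_def by simp
  then show ?thesis using True by simp
next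
  case False
  define t where "t = vnorm v"
  have t: "0 < t" using False vnorm_nonneg[of v] unfolding t_def by simp
  define u where "u = complex_of_real (1 / t) \<cdot>\<^sub>v v"
  have u: "u \<in> carrier_vec n" "vnorm u = 1"
    unfolding u_def vnorm_smult t_def[symmetric] using v t by (simp_all add: norm_divide)
  have Mu: "M *\<^sub>v u = complex_of_real (1 / t) \<cdot>\<^sub>v (M *\<^sub>v v)"
    unfolding u_def using M v by (simp add: mult_mat_vec)
  have "bdd_above {vnorm (M *\<^sub>v v) | v. v \<in> carrier_vec (dim_col M) \<and> vnorm v = 1}"
    using M bounded by (auto intro!: bdd_aboveI)
  then have "vnorm (M *\<^sub>v u) \<le> opnorm M"
    unfolding opnorm_def by (rule cSup_upper[rotated]) (use u M in auto)
  then have "(1 / t) * vnorm (M *\<^sub>v v) \<le> opnorm M"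
    unfolding Mu vnorm_smult using t by (simp add: norm_divide)
  then show ?thesis unfolding t_def[symmetric] using t by (simp add: field_simps)
qed

lemma binary_obs_diff_sqnorm_le:
  assumes B0: "binary_obs n B0" and B1: "binary_obs n B1" and op: "opnorm (B0 - B1) \<le> 2 * k"
    and v: "v \<in> carrier_vec n"
  shows "sqnorm {..<n} (($) ((B0 - B1) *\<^sub>v v)) \<le> 4 * k\<^sup>2 * sqnorm {..<n} (($) v)"
proof -
  have c0: "B0 \<in> carrier_mat n n" and c1: "B1 \<in> carrier_mat n n"
    using B0 B1 binary_obs_carrier by auto
  have M: "B0 - B1 \<in> carrier_mat n n" using c1 by (rule minus_carrier_mat)
  have diff: "vnorm ((B0 - B1) *\<^sub>v w) = sqrt (sqnorm {..<n} (\<lambda>i. (B0 *\<^sub>v w) $ i - (B1 *\<^sub>v w) $ i))"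
    if "w \<in> carrier_vec n" for w
    unfolding vnorm_sqnorm using M c0 c1 that
    by (simp add: minus_mult_distrib_mat_vec sqnorm_def)
  have "vnorm ((B0 - B1) *\<^sub>v w) \<le> 2" if w: "w \<in> carrier_vec n" "vnorm w = 1" for w
  proof -
    have "vnorm ((B0 - B1) *\<^sub>v w) \<le> sqrt (sqnorm {..<n} (($) (B0 *\<^sub>v w))) + sqrt (sqnorm {..<n} (($) (B1 *\<^sub>v w)))"
      unfolding diff[OF w(1)] by (rule sqnorm_diff_triangle)
    also have "\<dots> \<le> 1 + 1"
      using binary_obs_vnorm_le[OF B0 w(1)] binary_obs_vnorm_le[OF B1 w(1)] c0 c1 w
      unfolding vnorm_sqnorm by (intro add_mono) simp_all
    finally show ?thesis by simp
  qed
  then have "vnorm ((B0 - B1) *\<^sub>v v) \<le> opnorm (B0 - B1) * vnorm v"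
    by (rule vnorm_mult_le_opnorm[OF M _ v])
  also have "\<dots> \<le> 2 * k * vnorm v" by (rule mult_right_mono[OF op vnorm_nonneg])
  finally have "(vnorm ((B0 - B1) *\<^sub>v v))\<^sup>2 \<le> (2 * k * vnorm v)\<^sup>2"
    by (rule power_mono[OF _ vnorm_nonneg])
  then show ?thesis using c1 v unfolding vnorm_sqnorm by (simp add: power_mult_distrib sqnorm_nonneg)
qed

section \<open>Tensor products\<close>

lemma sum_lessThan_mult_nat: "(\<Sum>r<m * n. f r) = (\<Sum>i<m. \<Sum>j<(n::nat). f (i * n + j))"
proof -
  have "(\<Sum>j<n. f (i * n + j)) = sum f {i * n..<i * n + n}" for i
    using sum.shift_bounds_nat_ivl[of f 0 "i * n" n] by (simp add: atLeast0LessThan add.commute)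
  then show ?thesis using sum.nat_group[of f n m] by (simp add: mult.commute)
qed

lemma mult_add_less_mult: "i < m \<Longrightarrow> j < n \<Longrightarrow> i * n + j < m * (n::nat)"
proof -
  assume "i < m" "j < n"
  then have "i * n + j < (i + 1) * n" by simp
  also have "\<dots> \<le> m * n" using \<open>i < m\<close> by (intro mult_right_mono) auto
  finally show ?thesis .
qed

lemma sqnorm_pairs: "sqnorm ({..<m} \<times> {..<n}) f = (\<Sum>k<m. \<Sum>j<n. (cmod (f (k, j)))\<^sup>2)"
  unfolding sqnorm_def by (simp add: sum.cartesian_product)

lemma sqnorm_lessThan_mult:
  fixes g :: "nat \<Rightarrow> complex"
  shows "sqnorm {..<m * n} g = (\<Sum>k<m. \<Sum>j<n. (cmod (g (k * n + j)))\<^sup>2)"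
  unfolding sqnorm_def by (rule sum_lessThan_mult_nat[of "\<lambda>r. (cmod (g r))\<^sup>2"])

text \<open>The vectors (A \<otimes> 1) \<psi> and (1 \<otimes> B) \<psi> of C^m \<otimes> C^n, with the coordinate of |k>|j> at the pair (k, j).\<close>

definition left_action :: "nat \<Rightarrow> nat \<Rightarrow> complex mat \<Rightarrow> complex vec \<Rightarrow> nat \<times> nat \<Rightarrow> complex" where
  "left_action m n A psi = (\<lambda>(k, j). \<Sum>i<m. A $$ (k, i) * psi $ (i * n + j))"

definition right_action :: "nat \<Rightarrow> complex mat \<Rightarrow> complex vec \<Rightarrow> nat \<times> nat \<Rightarrow> complex" where
  "right_action n B psi = (\<lambda>(k, j). \<Sum>l<n. B $$ (j, l) * psi $ (k * n + l))"

lemma left_action_column: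
  assumes "A \<in> carrier_mat m m" "k < m"
  shows "left_action m n A psi (k, j) = (A *\<^sub>v vec m (\<lambda>i. psi $ (i * n + j))) $ k"
  unfolding left_action_def using assms by (simp add: mult_mat_vec_index_sum del: index_mult_mat_vec)

lemma right_action_row:
  assumes "B \<in> carrier_mat n n" "j < n"
  shows "right_action n B psi (k, j) = (B *\<^sub>v vec n (\<lambda>l. psi $ (k * n + l))) $ j"
  unfolding right_action_def using assms by (simp add: mult_mat_vec_index_sum del: index_mult_mat_vec)

lemma left_action_sqnorm_le:
  assumes A: "A \<in> carrier_mat m m"
    and bound: "\<And>v. v \<in> carrier_vec m \<Longrightarrow> sqnorm {..<m} (($) (A *\<^sub>v v)) \<le> t * sqnorm {..<m} (($) v)"
  shows "sqnorm ({..<m} \<times> {..<n}) (left_action m n A psi) \<le> t * sqnorm {..<m * n} (($) psi)"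
proof -
  define col where "col j = vec m (\<lambda>i. psi $ (i * n + j))" for j
  have "sqnorm ({..<m} \<times> {..<n}) (left_action m n A psi) = (\<Sum>j<n. sqnorm {..<m} (($) (A *\<^sub>v col j)))"
    unfolding sqnorm_pairs unfolding sqnorm_def col_def
    by (subst sum.swap) (intro sum.cong refl, simp add: left_action_column[OF A])
  also have "\<dots> \<le> (\<Sum>j<n. t * sqnorm {..<m} (($) (col j)))"
    by (intro sum_mono bound) (simp add: col_def)
  also have "\<dots> = t * (\<Sum>j<n. sqnorm {..<m} (($) (col j)))" by (simp add: sum_distrib_left)
  also have "\<dots> = t * sqnorm {..<m * n} (($) psi)"
    unfolding sqnorm_lessThan_mult unfolding col_def sqnorm_def by (subst sum.swap) simp
  finally show ?thesis .
qed

lemma right_action_sqnorm_le: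
  assumes B: "B \<in> carrier_mat n n"
    and bound: "\<And>v. v \<in> carrier_vec n \<Longrightarrow> sqnorm {..<n} (($) (B *\<^sub>v v)) \<le> t * sqnorm {..<n} (($) v)"
  shows "sqnorm ({..<m} \<times> {..<n}) (right_action n B psi) \<le> t * sqnorm {..<m * n} (($) psi)"
proof -
  define row where "row k = vec n (\<lambda>l. psi $ (k * n + l))" for k
  have "sqnorm ({..<m} \<times> {..<n}) (right_action n B psi) = (\<Sum>k<m. sqnorm {..<n} (($) (B *\<^sub>v row k)))"
    unfolding sqnorm_pairs unfolding sqnorm_def row_def
    by (intro sum.cong refl) (simp add: right_action_row[OF B])
  also have "\<dots> \<le> (\<Sum>k<m. t * sqnorm {..<n} (($) (row k)))"
    by (intro sum_mono bound) (simp add: row_def)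
  also have "\<dots> = t * (\<Sum>k<m. sqnorm {..<n} (($) (row k)))" by (simp add: sum_distrib_left)
  also have "\<dots> = t * sqnorm {..<m * n} (($) psi)"
    unfolding sqnorm_lessThan_mult unfolding row_def sqnorm_def by simp
  finally show ?thesis .
qed

lemma right_action_diff:
  assumes "B0 \<in> carrier_mat n n" "B1 \<in> carrier_mat n n" "j < n"
  shows "right_action n B0 psi (k, j) - right_action n B1 psi (k, j) = right_action n (B0 - B1) psi (k, j)"
  unfolding right_action_def using assms by (simp add: sum_subtractf algebra_simps)

lemma expect_kron:
  assumes A: "hermitian m A" and B: "B \<in> carrier_mat n n" and psi: "psi \<in> carrier_vec (m * n)"
  shows "expect psi (kron A B) = (\<Sum>p\<in>{..<m} \<times> {..<n}. cnj (left_action m n A psi p) * right_action n B psi p)"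
proof -
  have Ac: "A \<in> carrier_mat m m" and he: "\<And>i j. i < m \<Longrightarrow> j < m \<Longrightarrow> cnj (A $$ (j, i)) = A $$ (i, j)"
    using A unfolding hermitian_def by blast+
  define K where "K = kron A B"
  define W where "W = right_action n B psi"
  have K: "K \<in> carrier_mat (m * n) (m * n)" unfolding K_def kron_def using Ac B by auto
  have K_index: "K $$ (i * n + j, k * n + l) = A $$ (i, k) * B $$ (j, l)"
    if "i < m" "j < n" "k < m" "l < n" for i j k l
    unfolding K_def kron_def using Ac B that mult_add_less_mult by auto
  have Kpsi: "(K *\<^sub>v psi) $ (i * n + j) = (\<Sum>k<m. A $$ (i, k) * W (k, j))" if "i < m" "j < n" for i j
  proof -
    have "(K *\<^sub>v psi) $ (i * n + j) = (\<Sum>k<m. \<Sum>l<n. K $$ (i * n + j, k * n + l) * psi $ (k * n + l))"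
      by (simp add: mult_mat_vec_index_sum[OF K psi mult_add_less_mult[OF that]] sum_lessThan_mult_nat
          del: index_mult_mat_vec)
    also have "\<dots> = (\<Sum>k<m. A $$ (i, k) * W (k, j))"
      unfolding W_def right_action_def using that by (simp add: K_index sum_distrib_left mult.assoc)
    finally show ?thesis .
  qed
  have "expect psi (kron A B) = (\<Sum>i<m. \<Sum>j<n. cnj (psi $ (i * n + j)) * (K *\<^sub>v psi) $ (i * n + j))"
    unfolding expect_def cinner_def K_def[symmetric] using psi by (simp add: sum_lessThan_mult_nat)
  also have "\<dots> = (\<Sum>i<m. \<Sum>j<n. \<Sum>k<m. A $$ (i, k) * cnj (psi $ (i * n + j)) * W (k, j))"
    by (intro sum.cong refl) (simp add: Kpsi sum_distrib_left mult.assoc mult.left_commute)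
  also have "\<dots> = (\<Sum>k<m. \<Sum>j<n. \<Sum>i<m. A $$ (i, k) * cnj (psi $ (i * n + j)) * W (k, j))"
    by (subst sum.swap, subst (2) sum.swap) (simp only: sum.swap[of _ "{..<n}" "{..<m}"])
  also have "\<dots> = (\<Sum>k<m. \<Sum>j<n. cnj (left_action m n A psi (k, j)) * W (k, j))"
    unfolding left_action_def
    by (intro sum.cong refl) (simp add: cnj_sum sum_distrib_right he)
  also have "\<dots> = (\<Sum>p\<in>{..<m} \<times> {..<n}. cnj (left_action m n A psi p) * right_action n B psi p)"
    unfolding W_def by (simp add: sum.cartesian_product)
  finally show ?thesis .
qed

section \<open>The upper bound\<close>

lemma left_action_binary_obs_sqnorm_le:
  assumes "binary_obs m A"
  shows "sqnorm ({..<m} \<times> {..<n}) (left_action m n A psi) \<le> sqnorm {..<m * n} (($) psi)"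
  using left_action_sqnorm_le[OF binary_obs_carrier[OF assms], of 1] binary_obs_sqnorm_le[OF assms] by simp

lemma right_action_binary_obs_sqnorm_le:
  assumes "binary_obs n B"
  shows "sqnorm ({..<m} \<times> {..<n}) (right_action n B psi) \<le> sqnorm {..<m * n} (($) psi)"
  using right_action_sqnorm_le[OF binary_obs_carrier[OF assms], of 1] binary_obs_sqnorm_le[OF assms] by simp

lemma right_action_leak_sqnorm_le:
  assumes "binary_obs n B0" "binary_obs n B1" "opnorm (B0 - B1) \<le> 2 * k"
  shows "sqnorm ({..<m} \<times> {..<n}) (\<lambda>p. right_action n B0 psi p - right_action n B1 psi p)
    \<le> 4 * k\<^sup>2 * sqnorm {..<m * n} (($) psi)"
proof -
  have "sqnorm ({..<m} \<times> {..<n}) (\<lambda>p. right_action n B0 psi p - right_action n B1 psi p)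
      = sqnorm ({..<m} \<times> {..<n}) (right_action n (B0 - B1) psi)"
    using assms(1,2)[THEN binary_obs_carrier] by (intro sqnorm_cong) (auto simp: right_action_diff)
  also have "\<dots> \<le> 4 * k\<^sup>2 * sqnorm {..<m * n} (($) psi)"
    using assms(2)[THEN binary_obs_carrier]
    by (intro right_action_sqnorm_le minus_carrier_mat binary_obs_diff_sqnorm_le[OF assms])
  finally show ?thesis .
qed

lemma chsh_score_le:
  assumes cfg: "chsh_config k m n psi A0 A1 B00 B01 B10 B11" and k0: "0 \<le> k"
  shows "chsh_score psi A0 A1 B00 B01 B10 B11 \<le> leaky_chsh_value k"
proof -
  have psi: "psi \<in> carrier_vec (m * n)" and psi1: "sqnorm {..<m * n} (($) psi) = 1"
    and A: "binary_obs m A0" "binary_obs m A1"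
    and B: "binary_obs n B00" "binary_obs n B01" "binary_obs n B10" "binary_obs n B11"
    and op: "opnorm (B00 - B01) \<le> 2 * k" "opnorm (B10 - B11) \<le> 2 * k"
    using cfg unfolding chsh_config_def vnorm_sqnorm by auto
  define I where "I = {..<m} \<times> {..<n}"
  define u0 where "u0 = left_action m n A0 psi"
  define u1 where "u1 = left_action m n A1 psi"
  define a where "a = right_action n B00 psi"
  define b where "b = right_action n B10 psi"
  define c where "c = right_action n B01 psi"
  define d where "d = right_action n B11 psi"
  have e: "expect psi (kron A' B') = (\<Sum>p\<in>I. cnj (left_action m n A' psi p) * right_action n B' psi p)"
    if "binary_obs m A'" "binary_obs n B'" for A' B'
    unfolding I_def using that by (intro expect_kron[OF _ _ psi] binary_obs_hermitian binary_obs_carrier)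
  have "expect psi (kron A0 B00) + expect psi (kron A0 B10) + expect psi (kron A1 B01) - expect psi (kron A1 B11)
      = (\<Sum>p\<in>I. cnj (u0 p) * (a p + b p)) + (\<Sum>p\<in>I. cnj (u1 p) * (c p - d p))"
    unfolding e[OF A(1) B(1)] e[OF A(1) B(3)] e[OF A(2) B(2)] e[OF A(2) B(4)]
      u0_def u1_def a_def b_def c_def d_def
    by (simp add: sum.distrib sum_subtractf distrib_left right_diff_distrib)
  then have score: "chsh_score psi A0 A1 B00 B01 B10 B11 =
      Re (\<Sum>p\<in>I. cnj (u0 p) * (a p + b p)) + Re (\<Sum>p\<in>I. cnj (u1 p) * (c p - d p))"
    unfolding chsh_score_def by (simp only: plus_complex.sel)
  have obs: "sqnorm I (left_action m n A' psi) \<le> 1" if "binary_obs m A'" for A'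
    using left_action_binary_obs_sqnorm_le[OF that, where n = n and psi = psi] psi1 unfolding I_def by simp
  have obs': "sqnorm I (right_action n B' psi) \<le> 1" if "binary_obs n B'" for B'
    using right_action_binary_obs_sqnorm_le[OF that, where m = m and psi = psi] psi1 unfolding I_def by simp
  have leak: "sqnorm I (\<lambda>p. right_action n B' psi p - right_action n B'' psi p) \<le> 4 * k\<^sup>2"
    if "binary_obs n B'" "binary_obs n B''" "opnorm (B' - B'') \<le> 2 * k" for B' B''
    using right_action_leak_sqnorm_le[OF that, where m = m and psi = psi] psi1 unfolding I_def by simp
  show ?thesis
    unfolding score u0_def u1_def a_def b_def c_def d_def
    by (rule leaky_chsh_bound) (use k0 obs obs' leak A B op in \<open>auto simp: I_def\<close>)
qed

section \<open>Optimal qubit strategies\<close>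

lemma sum_lessThan_2: "(\<Sum>i<(2::nat). f i) = f 0 + f 1"
  by (simp add: eval_nat_numeral)

lemma less_2_cases: "i < (2::nat) \<longleftrightarrow> i = 0 \<or> i = 1"
  by auto

definition real_pauli :: "real \<Rightarrow> real \<Rightarrow> complex mat" where
  "real_pauli a b = mat_of_rows_list 2 [[complex_of_real b, complex_of_real a], [complex_of_real a, - complex_of_real b]]"

lemma real_pauli_dim [simp]: "dim_row (real_pauli a b) = 2" "dim_col (real_pauli a b) = 2"
  unfolding real_pauli_def mat_of_rows_list_def by simp_all

lemma real_pauli_carrier: "real_pauli a b \<in> carrier_mat 2 2"
  unfolding carrier_mat_def by simp

lemma real_pauli_index [simp]:
  "real_pauli a b $$ (0, 0) = b" "real_pauli a b $$ (0, 1) = a"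
  "real_pauli a b $$ (1, 0) = a" "real_pauli a b $$ (1, 1) = - b"
  "real_pauli a b $$ (0, Suc 0) = a" "real_pauli a b $$ (Suc 0, 0) = a" "real_pauli a b $$ (Suc 0, Suc 0) = - b"
  unfolding real_pauli_def mat_of_rows_list_def by simp_all

lemma real_pauli_eqI:
  assumes "M \<in> carrier_mat 2 2" "M $$ (0, 0) = b" "M $$ (0, 1) = a" "M $$ (1, 0) = a" "M $$ (1, 1) = - b"
  shows "M = real_pauli a b"
  by (rule eq_matI) (use assms real_pauli_carrier in \<open>auto simp: less_2_cases\<close>)

lemma sigma_x_eq_real_pauli: "sigma_x = real_pauli 1 0"
  unfolding sigma_x_def real_pauli_def by simp

lemma sigma_z_eq_real_pauli: "sigma_z = real_pauli 0 1"
  unfolding sigma_z_def real_pauli_def by simp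

lemma uminus_sigma_x_eq_real_pauli: "- sigma_x = real_pauli (- 1) 0"
  by (rule real_pauli_eqI) (simp_all add: sigma_x_eq_real_pauli real_pauli_carrier)

lemma pauli_combination_eq_real_pauli:
  "complex_of_real a \<cdot>\<^sub>m sigma_x + complex_of_real b \<cdot>\<^sub>m sigma_z = real_pauli a b"
  by (rule real_pauli_eqI) (simp_all add: sigma_x_eq_real_pauli sigma_z_eq_real_pauli real_pauli_carrier)

lemma real_pauli_diff: "real_pauli a b - real_pauli c d = real_pauli (a - c) (b - d)"
  by (rule real_pauli_eqI) (simp_all add: real_pauli_carrier minus_carrier_mat)

lemma vnorm_real_pauli_mult:
  assumes v: "v \<in> carrier_vec 2"
  shows "vnorm (real_pauli a b *\<^sub>v v) = sqrt (a\<^sup>2 + b\<^sup>2) * vnorm v"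
proof -
  have "(real_pauli a b *\<^sub>v v) $ 0 = b * v $ 0 + a * v $ 1" "(real_pauli a b *\<^sub>v v) $ 1 = a * v $ 0 - b * v $ 1"
    by (simp_all add: mult_mat_vec_index_sum[OF real_pauli_carrier v] sum_lessThan_2 del: index_mult_mat_vec)
  moreover have "(cmod (b * v $ 0 + a * v $ 1))\<^sup>2 + (cmod (a * v $ 0 - b * v $ 1))\<^sup>2
      = (a\<^sup>2 + b\<^sup>2) * ((cmod (v $ 0))\<^sup>2 + (cmod (v $ 1))\<^sup>2)"
    unfolding cmod_power2 by (simp add: power2_eq_square algebra_simps)
  ultimately show ?thesis
    unfolding vnorm_def using real_pauli_carrier[of a b] v by (simp add: sum_lessThan_2 real_sqrt_mult)
qed

lemma opnorm_real_pauli_le: "opnorm (real_pauli a b) \<le> sqrt (a\<^sup>2 + b\<^sup>2)"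
proof -
  define e where "e = vec 2 (\<lambda>i. if i = 0 then (1::complex) else 0)"
  have e: "e \<in> carrier_vec 2" "vnorm e = 1" unfolding e_def vnorm_def by (simp_all add: sum_lessThan_2)
  show ?thesis unfolding opnorm_def using real_pauli_carrier[of a b]
  proof (intro cSup_least)
    show "{vnorm (real_pauli a b *\<^sub>v v) |v. v \<in> carrier_vec (dim_col (real_pauli a b)) \<and> vnorm v = 1} \<noteq> {}"
      using e real_pauli_carrier[of a b] by auto
  qed (auto simp: vnorm_real_pauli_mult)
qed

definition real_sym_mat :: "real \<Rightarrow> real \<Rightarrow> real \<Rightarrow> complex mat" where
  "real_sym_mat x y z = mat_of_rows_list 2 [[complex_of_real x, complex_of_real y], [complex_of_real y, complex_of_real z]]"

lemma real_sym_mat_dim [simp]: "dim_row (real_sym_mat x y z) = 2" "dim_col (real_sym_mat x y z) = 2"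
  unfolding real_sym_mat_def mat_of_rows_list_def by simp_all

lemma real_sym_mat_carrier: "real_sym_mat x y z \<in> carrier_mat 2 2"
  unfolding carrier_mat_def by simp

lemma real_sym_mat_index [simp]:
  "real_sym_mat x y z $$ (0, 0) = x" "real_sym_mat x y z $$ (0, 1) = y"
  "real_sym_mat x y z $$ (1, 0) = y" "real_sym_mat x y z $$ (1, 1) = z"
  "real_sym_mat x y z $$ (0, Suc 0) = y" "real_sym_mat x y z $$ (Suc 0, 0) = y"
  "real_sym_mat x y z $$ (Suc 0, Suc 0) = z"
  unfolding real_sym_mat_def mat_of_rows_list_def by simp_all

lemma quadratic_form_nonneg:
  fixes x y z a b c d :: real
  assumes "0 \<le> x" "0 \<le> z" "y\<^sup>2 \<le> x * z"
  shows "0 \<le> x * (a\<^sup>2 + b\<^sup>2) + z * (c\<^sup>2 + d\<^sup>2) + 2 * y * (a * c + b * d)"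
proof (cases "x = 0")
  case True
  then show ?thesis using assms by simp
next
  case False
  then have x: "0 < x" using assms by simp
  have "x * (x * (a\<^sup>2 + b\<^sup>2) + z * (c\<^sup>2 + d\<^sup>2) + 2 * y * (a * c + b * d))
     = (x * a + y * c)\<^sup>2 + (x * b + y * d)\<^sup>2 + (x * z - y\<^sup>2) * (c\<^sup>2 + d\<^sup>2)"
    by (simp add: power2_eq_square algebra_simps)
  also have "\<dots> \<ge> 0" using assms by simp
  finally show ?thesis using x by (simp add: zero_le_mult_iff)
qed

lemma psd_real_sym_mat:
  assumes "0 \<le> x" "0 \<le> z" "y\<^sup>2 \<le> x * z"
  shows "psd 2 (real_sym_mat x y z)"
  unfolding psd_def
proof (intro conjI ballI real_sym_mat_carrier)
  fix v :: "complex vec" assume v: "v \<in> carrier_vec 2"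
  have e: "cinner v (real_sym_mat x y z *\<^sub>v v)
      = cnj (v $ 0) * (x * v $ 0 + y * v $ 1) + cnj (v $ 1) * (y * v $ 0 + z * v $ 1)"
    using v by (simp add: cinner_mult_mat_vec_sum[OF real_sym_mat_carrier v v] sum_lessThan_2 algebra_simps)
  show "cinner v (real_sym_mat x y z *\<^sub>v v) \<in> \<real>"
    unfolding e complex_is_Real_iff by (simp add: algebra_simps)
  show "0 \<le> Re (cinner v (real_sym_mat x y z *\<^sub>v v))"
    unfolding e using quadratic_form_nonneg[OF assms, of "Re (v $ 0)" "Im (v $ 0)" "Re (v $ 1)" "Im (v $ 1)"]
    by (simp add: power2_eq_square algebra_simps)
qed

lemma real_pauli_binary_obs:
  assumes ab: "a\<^sup>2 + b\<^sup>2 = 1"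
  shows "binary_obs 2 (real_pauli a b)"
  unfolding binary_obs_def
proof (intro exI conjI)
  \<comment> \<open>the spectral projections (1 \<plusminus> real_pauli a b) / 2\<close>
  have "b\<^sup>2 \<le> 1" using ab zero_le_power2[of a] by linarith
  then have b: "- 1 \<le> b" "b \<le> 1" using abs_square_le_1[of b] by (auto simp: abs_le_iff)
  have a2: "(a / 2)\<^sup>2 = (1 + b) / 2 * ((1 - b) / 2)" using ab by (simp add: power_divide field_simps power2_eq_square)
  show "psd 2 (real_sym_mat ((1 + b) / 2) (a / 2) ((1 - b) / 2))"
    by (rule psd_real_sym_mat) (use b a2 in simp_all)
  show "psd 2 (real_sym_mat ((1 - b) / 2) (- a / 2) ((1 + b) / 2))"
    by (rule psd_real_sym_mat) (use b a2 in \<open>simp_all add: power2_minus\<close>)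
  show "real_sym_mat ((1 + b) / 2) (a / 2) ((1 - b) / 2) + real_sym_mat ((1 - b) / 2) (- a / 2) ((1 + b) / 2) = 1\<^sub>m 2"
    by (rule eq_matI) (auto simp: less_2_cases field_simps)
  show "real_pauli a b = real_sym_mat ((1 + b) / 2) (a / 2) ((1 - b) / 2) - real_sym_mat ((1 - b) / 2) (- a / 2) ((1 + b) / 2)"
    by (rule sym[OF real_pauli_eqI]) (simp_all add: real_sym_mat_carrier minus_carrier_mat field_simps)
qed

lemma real_pauli_hermitian: "hermitian 2 (real_pauli a b)"
  unfolding hermitian_def using real_pauli_carrier by (auto simp: less_2_cases)

lemma phi_plus_index [simp]:
  "phi_plus $ 0 = 1 / sqrt 2" "phi_plus $ 1 = 0" "phi_plus $ 2 = 0" "phi_plus $ 3 = 1 / sqrt 2"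
  "phi_plus $ Suc 0 = 0" "phi_plus $ Suc (Suc 0) = 0" "phi_plus $ Suc (Suc (Suc 0)) = 1 / sqrt 2"
  unfolding phi_plus_def vec_of_list_index by simp_all

lemma phi_plus_carrier: "phi_plus \<in> carrier_vec (2 * 2)"
  unfolding phi_plus_def carrier_vec_def by simp

lemma vnorm_phi_plus: "vnorm phi_plus = 1"
  unfolding vnorm_def using phi_plus_carrier by (simp add: eval_nat_numeral power_divide norm_divide)

lemma expect_phi_plus_kron_real_pauli:
  "expect phi_plus (kron (real_pauli a b) (real_pauli c d)) = complex_of_real (a * c + b * d)"
proof -
  have s2: "complex_of_real (sqrt 2) * complex_of_real (sqrt 2) = 2"
    unfolding of_real_mult[symmetric] by simp
  have "expect phi_plus (kron (real_pauli a b) (real_pauli c d)) = (\<Sum>k<2. \<Sum>j<2.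
      cnj (left_action 2 2 (real_pauli a b) phi_plus (k, j)) * right_action 2 (real_pauli c d) phi_plus (k, j))"
    unfolding expect_kron[OF real_pauli_hermitian real_pauli_carrier phi_plus_carrier]
    by (simp add: sum.cartesian_product)
  also have "\<dots> = complex_of_real (a * c + b * d)"
    unfolding sum_lessThan_2 left_action_def right_action_def
    by (simp add: algebra_simps power_divide) (simp add: s2)
  finally show ?thesis .
qed

lemma real_pauli_strategy_chsh_config:
  assumes "a0\<^sup>2 + b0\<^sup>2 = 1" "a1\<^sup>2 + b1\<^sup>2 = 1" "c0\<^sup>2 + d0\<^sup>2 = 1" "c1\<^sup>2 + d1\<^sup>2 = 1"
    and "sqrt ((a0 - a1)\<^sup>2 + (b0 - b1)\<^sup>2) \<le> 2 * k" "sqrt ((c0 - c1)\<^sup>2 + (d0 - d1)\<^sup>2) \<le> 2 * k"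
  shows "chsh_config k 2 2 phi_plus sigma_z sigma_x
    (real_pauli a0 b0) (real_pauli a1 b1) (real_pauli c0 d0) (real_pauli c1 d1)"
proof -
  have "binary_obs 2 sigma_z" "binary_obs 2 sigma_x"
    unfolding sigma_z_eq_real_pauli sigma_x_eq_real_pauli by (simp_all add: real_pauli_binary_obs)
  moreover have "opnorm (real_pauli a0 b0 - real_pauli a1 b1) \<le> 2 * k"
    "opnorm (real_pauli c0 d0 - real_pauli c1 d1) \<le> 2 * k"
    unfolding real_pauli_diff using opnorm_real_pauli_le assms(5,6) order_trans by blast+
  ultimately show ?thesis
    unfolding chsh_config_def using assms(1-4) phi_plus_carrier vnorm_phi_plus
    by (simp add: real_pauli_binary_obs)
qed

lemma real_pauli_strategy_chsh_score:
  "chsh_score phi_plus sigma_z sigma_x (real_pauli a0 b0) (real_pauli a1 b1) (real_pauli c0 d0) (real_pauli c1 d1)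
    = b0 + d0 + a1 - c1"
  unfolding chsh_score_def sigma_z_eq_real_pauli sigma_x_eq_real_pauli expect_phi_plus_kron_real_pauli
  by simp

lemma small_leak_strategy:
  fixes k :: real
  assumes "0 \<le> k" "k \<le> 1"
  defines "c \<equiv> sqrt (1 - k\<^sup>2)"
  defines "B00 \<equiv> real_pauli ((- k + c) / sqrt 2) ((k + c) / sqrt 2)"
    and "B01 \<equiv> real_pauli ((k + c) / sqrt 2) ((- k + c) / sqrt 2)"
    and "B10 \<equiv> real_pauli ((k - c) / sqrt 2) ((k + c) / sqrt 2)"
    and "B11 \<equiv> real_pauli ((- k - c) / sqrt 2) ((- k + c) / sqrt 2)"
  shows "chsh_config k 2 2 phi_plus sigma_z sigma_x B00 B01 B10 B11"
    and "chsh_score phi_plus sigma_z sigma_x B00 B01 B10 B11 = 2 * sqrt 2 * (k + c)"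
proof -
  have c2: "c\<^sup>2 = 1 - k\<^sup>2" unfolding c_def using assms(1,2) by (simp add: power_le_one)
  have unit: "(x / sqrt 2)\<^sup>2 + (y / sqrt 2)\<^sup>2 = 1" if "x\<^sup>2 + y\<^sup>2 = 2" for x y
    using that by (simp add: power_divide add_divide_distrib[symmetric])
  have leak: "sqrt ((x / sqrt 2 - x' / sqrt 2)\<^sup>2 + (y / sqrt 2 - y' / sqrt 2)\<^sup>2) = 2 * k"
    if "(x - x')\<^sup>2 + (y - y')\<^sup>2 = 8 * k\<^sup>2" for x x' y y'
  proof -
    have sq: "(x / sqrt 2 - x' / sqrt 2)\<^sup>2 + (y / sqrt 2 - y' / sqrt 2)\<^sup>2 = (2 * k)\<^sup>2"
      using that by (simp add: diff_divide_distrib[symmetric] power_divide add_divide_distrib[symmetric])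
    show ?thesis unfolding sq real_sqrt_abs using assms(1) by simp
  qed
  show "chsh_config k 2 2 phi_plus sigma_z sigma_x B00 B01 B10 B11"
    unfolding B00_def B01_def B10_def B11_def
    by (intro real_pauli_strategy_chsh_config unit order_eq_refl leak)
      (use c2 in \<open>simp_all add: power2_eq_square algebra_simps\<close>)
  have sqrt2: "4 / sqrt 2 = 2 * sqrt (2::real)"
    by (simp add: field_simps)
  have "chsh_score phi_plus sigma_z sigma_x B00 B01 B10 B11 = 4 * (k + c) / sqrt 2"
    unfolding B00_def B01_def B10_def B11_def real_pauli_strategy_chsh_score
    by (simp add: add_divide_distrib[symmetric] diff_divide_distrib[symmetric])
  also have "\<dots> = 4 / sqrt 2 * (k + c)" by simp
  finally show "chsh_score phi_plus sigma_z sigma_x B00 B01 B10 B11 = 2 * sqrt 2 * (k + c)"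
    unfolding sqrt2 .
qed

lemma large_leak_strategy:
  assumes "1 / sqrt 2 \<le> k"
  shows "chsh_config k 2 2 phi_plus sigma_z sigma_x sigma_z sigma_x sigma_z (- sigma_x)"
    and "chsh_score phi_plus sigma_z sigma_x sigma_z sigma_x sigma_z (- sigma_x) = 4"
proof -
  have "sqrt 2 = 2 * (1 / sqrt (2::real))" by (simp add: field_simps)
  then have "sqrt 2 \<le> 2 * k" using assms by linarith
  then show "chsh_config k 2 2 phi_plus sigma_z sigma_x sigma_z sigma_x sigma_z (- sigma_x)"
    using real_pauli_strategy_chsh_config[of 0 1 1 0 0 1 "- 1" 0 k]
    unfolding uminus_sigma_x_eq_real_pauli[symmetric] sigma_z_eq_real_pauli[symmetric]
      sigma_x_eq_real_pauli[symmetric]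
    by simp
  show "chsh_score phi_plus sigma_z sigma_x sigma_z sigma_x sigma_z (- sigma_x) = 4"
    using real_pauli_strategy_chsh_score[of 0 1 1 0 0 1 "- 1" 0]
    unfolding uminus_sigma_x_eq_real_pauli[symmetric] sigma_z_eq_real_pauli[symmetric]
      sigma_x_eq_real_pauli[symmetric]
    by simp
qed

lemma leaky_chsh_value_eq_4:
  assumes "1 / sqrt 2 \<le> k"
  shows "leaky_chsh_value k = 4"
proof (cases "k = 1 / sqrt 2")
  case True
  then have "sqrt (1 - k\<^sup>2) = 1 / sqrt 2"
    by (simp add: power_divide real_sqrt_divide)
  then show ?thesis using True unfolding leaky_chsh_value_def by simp
next
  case False
  then show ?thesis using assms unfolding leaky_chsh_value_def by simp
qed

lemma leaky_chsh_value_attained: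
  assumes "0 \<le> k" "k \<le> 1"
  shows "leaky_chsh_value k \<in> chsh_vals k"
proof (cases "k \<le> 1 / sqrt 2")
  case True
  then show ?thesis
    using small_leak_strategy[OF assms] unfolding chsh_vals_def leaky_chsh_value_def by force
next
  case False
  then show ?thesis
    using large_leak_strategy[of k] leaky_chsh_value_eq_4[of k] unfolding chsh_vals_def by force
qed

lemma S_q_eq_leaky_chsh_value:
  assumes "0 \<le> k" "k \<le> 1"
  shows "S_q k = leaky_chsh_value k"
  unfolding S_q_def
  by (rule cSup_eq_maximum[OF leaky_chsh_value_attained[OF assms]])
    (auto simp: chsh_vals_def intro: chsh_score_le[OF _ assms(1)])

theorem mainTheorem10:
  fixes \<kappa> :: real
  assumes "0 \<le> \<kappa>" and "\<kappa> < 1"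
  defines "c \<equiv> sqrt (1 - \<kappa>\<^sup>2)"
  shows "S_q \<kappa> = (if \<kappa> \<le> 1 / sqrt 2 then 2 * sqrt 2 * (\<kappa> + c) else 4)
    \<and> (\<forall>s \<in> chsh_vals \<kappa>. s \<le> S_q \<kappa>)
    \<and> (\<kappa> \<le> 1 / sqrt 2 \<longrightarrow>
        (let B00 = complex_of_real ((- \<kappa> + c) / sqrt 2) \<cdot>\<^sub>m sigma_x
                   + complex_of_real ((\<kappa> + c) / sqrt 2) \<cdot>\<^sub>m sigma_z;
             B01 = complex_of_real ((\<kappa> + c) / sqrt 2) \<cdot>\<^sub>m sigma_x
                   + complex_of_real ((- \<kappa> + c) / sqrt 2) \<cdot>\<^sub>m sigma_z;
             B10 = complex_of_real ((\<kappa> - c) / sqrt 2) \<cdot>\<^sub>m sigma_x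
                   + complex_of_real ((\<kappa> + c) / sqrt 2) \<cdot>\<^sub>m sigma_z;
             B11 = complex_of_real ((- \<kappa> - c) / sqrt 2) \<cdot>\<^sub>m sigma_x
                   + complex_of_real ((- \<kappa> + c) / sqrt 2) \<cdot>\<^sub>m sigma_z
         in chsh_config \<kappa> 2 2 phi_plus sigma_z sigma_x B00 B01 B10 B11
            \<and> chsh_score phi_plus sigma_z sigma_x B00 B01 B10 B11 = S_q \<kappa>))
    \<and> (1 / sqrt 2 \<le> \<kappa> \<longrightarrow>
         chsh_config \<kappa> 2 2 phi_plus sigma_z sigma_x sigma_z sigma_x sigma_z (- sigma_x)
       \<and> chsh_score phi_plus sigma_z sigma_x sigma_z sigma_x sigma_z (- sigma_x) = S_q \<kappa>)"
proof -
  have k1: "\<kappa> \<le> 1" using assms(2) by simp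
  have S: "S_q \<kappa> = leaky_chsh_value \<kappa>" by (rule S_q_eq_leaky_chsh_value[OF assms(1) k1])
  have upper: "\<forall>s \<in> chsh_vals \<kappa>. s \<le> S_q \<kappa>"
    unfolding S chsh_vals_def using chsh_score_le[OF _ assms(1)] by blast
  show ?thesis
    unfolding Let_def pauli_combination_eq_real_pauli
    using S upper small_leak_strategy[OF assms(1) k1] large_leak_strategy leaky_chsh_value_eq_4
    unfolding c_def leaky_chsh_value_def by auto
qed

end
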